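(* Let $\Theta=\tilde p/p$ be a rational inner function on $\mathbb{D}^2$, where $p(z)=a+bz_1+cz_2$ is a polynomial with a zero on $\mathbb{T}^2$. Then $|a|=|b|+|c|$.
   Context: $\mathbb{D}$ is the open unit disk, $\mathbb{T}$ the unit circle. Here $\Theta=\tilde p/p$ means the standard representation of a rational inner function: $p$ has no zeros on $\mathbb{D}^2$ (so that $\Theta$ is holomorphic on $\mathbb{D}^2$), and $\tilde p(z)=z_1z_2\overline{p(1/\bar z_1,1/\bar z_2)}$. *)

theory Defs
  imports "HOL-Analysis.Analysis"
begin

definition lin_poly :: "complex \<Rightarrow> complex \<Rightarrow> complex \<Rightarrow> complex \<Rightarrow> complex \<Rightarrow> complex" where
  "lin_poly a b c z1 z2 = a + b * z1 + c * z2"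

text \<open>Standard representation of a rational inner function Theta = ptilde / p:
  p has no zeros on the open bidisk D^2.\<close>
definition no_zeros_bidisk :: "(complex \<Rightarrow> complex \<Rightarrow> complex) \<Rightarrow> bool" where
  "no_zeros_bidisk p \<longleftrightarrow> (\<forall>z1 z2. norm z1 < 1 \<longrightarrow> norm z2 < 1 \<longrightarrow> p z1 z2 \<noteq> 0)"

definition has_zero_torus :: "(complex \<Rightarrow> complex \<Rightarrow> complex) \<Rightarrow> bool" where
  "has_zero_torus p \<longleftrightarrow> (\<exists>z1 z2. norm z1 = 1 \<and> norm z2 = 1 \<and> p z1 z2 = 0)"

end

theory Submission
  imports Defs
begin

text \<open>A zero of p on the torus forces |a| \<le> |b| + |c| by the triangle inequality. Conversely,
  (z1, z2) \<mapsto> b z1 + c z2 maps the open bidisk onto the open disk of radius |b| + |c|, so if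
  |a| < |b| + |c| then p also vanishes in the bidisk, which a rational inner function excludes.\<close>

lemma mult_cnj_sgn: "z * cnj (sgn z) = complex_of_real (norm z)"
proof (cases "z = 0")
  case False
  have "z * cnj (sgn z) = z * cnj z / complex_of_real (norm z)"
    by (simp add: sgn_div_norm scaleR_conv_of_real divide_inverse)
  also have "\<dots> = complex_of_real (norm z)"
    using False by (simp add: complex_norm_square[symmetric] power2_eq_square)
  finally show ?thesis .
qed simp

lemma norm_le_norm_add_of_torus_zero:
  fixes a b c z1 z2 :: complex
  assumes "norm z1 = 1" "norm z2 = 1" "a + b * z1 + c * z2 = 0"
  shows "norm a \<le> norm b + norm c"
proof -
  have "norm a = norm (b * z1 + c * z2)"
    using assms(3) by (metis add.assoc add_eq_0_iff norm_minus_cancel)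
  also have "\<dots> \<le> norm (b * z1) + norm (c * z2)"
    by (rule norm_triangle_ineq)
  finally show ?thesis
    using assms(1,2) by (simp add: norm_mult)
qed

lemma linear_form_onto_disk:
  fixes b c w :: complex
  assumes "norm w < norm b + norm c"
  obtains z1 z2 where "norm z1 < 1" "norm z2 < 1" "b * z1 + c * z2 = w"
proof -
  define r where "r = norm b + norm c"
  have r_pos: "r > 0"
    using assms norm_ge_zero[of w] unfolding r_def by linarith
  \<comment> \<open>Rotating b z1 and c z2 onto the direction of w gives b z1 = |b| w / r and c z2 = |c| w / r.\<close>
  define z1 where "z1 = w * cnj (sgn b) / complex_of_real r"
  define z2 where "z2 = w * cnj (sgn c) / complex_of_real r"
  have "norm w / r < 1"
    using assms r_pos by (simp add: r_def)
  moreover have "norm z1 \<le> norm w / r" "norm z2 \<le> norm w / r"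
    using r_pos by (simp_all add: z1_def z2_def norm_mult norm_divide norm_sgn divide_right_mono)
  moreover have "b * z1 + c * z2 = w * (b * cnj (sgn b) + c * cnj (sgn c)) / complex_of_real r"
    by (simp add: z1_def z2_def add_divide_distrib algebra_simps)
  then have "b * z1 + c * z2 = w"
    using r_pos by (simp add: mult_cnj_sgn r_def flip: of_real_add)
  ultimately show ?thesis
    by (intro that) auto
qed

theorem proposition5p3:
  fixes a b c :: complex
  assumes "no_zeros_bidisk (lin_poly a b c)"
    and "has_zero_torus (lin_poly a b c)"
  shows "norm a = norm b + norm c"
proof -
  obtain z1 z2 where "norm z1 = 1" "norm z2 = 1" "a + b * z1 + c * z2 = 0"
    using assms(2) unfolding has_zero_torus_def lin_poly_def by auto
  then have le: "norm a \<le> norm b + norm c"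
    by (rule norm_le_norm_add_of_torus_zero)
  show ?thesis
  proof (rule ccontr)
    assume "norm a \<noteq> norm b + norm c"
    with le have "norm (- a) < norm b + norm c"
      by simp
    then obtain w1 w2 where "norm w1 < 1" "norm w2 < 1" "b * w1 + c * w2 = - a"
      by (rule linear_form_onto_disk)
    then have "lin_poly a b c w1 w2 = 0"
      by (simp add: lin_poly_def add.assoc)
    with assms(1) \<open>norm w1 < 1\<close> \<open>norm w2 < 1\<close> show False
      unfolding no_zeros_bidisk_def by blast
  qed
qed

end
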